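(* Let $s$ be an integer and let $G(x,L)=1+\operatorname{sgn}(s)\sum_{n\ge1}\gamma_n(x)L^n$ be a solution of the analytic Dyson-Schwinger equation \[ G(x,L) = 1 + \operatorname{sgn}(s)\sum_{k \geq 1}x^k\,G\!\left(x,\tfrac{d}{d(-\rho)}\right)^{1+sk}(e^{-L\rho}-1)F_{k}(\rho) \Big|_{\rho=0}, \qquad F_k(\rho) = \sum_{i=-1}^{\infty} f_{k,i+1}\rho^i . \] For each $k\ge1$ let $g_k(\rho)$ be a formal Laurent series with real coefficients of the form $g_k(\rho)=\frac{1}{\rho}+O(\rho^0)$. Then there exist unique real numbers $r_k$, $k\geq 1$, such that \[ \sum_{k \geq 1}x^kG\!\left(x,\tfrac{d}{d(-\rho)}\right)^{1+sk}(e^{-L\rho}-1)F_{k}(\rho) \Big|_{\rho=0} = \sum_{k \geq 1}x^kG\!\left(x,\tfrac{d}{d(-\rho)}\right)^{1+sk}(e^{-L\rho}-1)\,r_k\,g_k(\rho) \Big|_{\rho=0} \] as formal series in $x$ and $L$. In particular (taking $g_k(\rho)=1/(\rho(1-\rho))$) each $F_k$ may be replaced by a pure geometric series $r_k/(\rho(1-\rho))$ without any additional correction terms involving higher powers of $L$.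
   Context: $\operatorname{sgn}(s)\in\{-1,0,1\}$ denotes the sign of $s$. The coefficients $f_{k,j}$ are given real numbers, so each $F_k(\rho)$ is a formal Laurent series in $\rho$ with at most a simple pole at $0$. $G(x,L)$ is a formal power series in $x$ and $L$ with constant term $1$, and the $\gamma_n(x)$ are formal power series in $x$ without constant term; powers $G^{m}$ with $m$ a negative integer are formal inverses. Notation: for a formal series $H(x,L)$ with constant term $1$ and an integer $m$, write $H(x,L)^m=\sum_{n\ge0}c_n(x)L^n$; then $H\!\left(x,\frac{d}{d(-\rho)}\right)^{m}(e^{-L\rho}-1)F(\rho)\big|_{\rho=0}$ means $\sum_{n\ge0}c_n(x)\left(-\frac{d}{d\rho}\right)^n\big[(e^{-L\rho}-1)F(\rho)\big]$ evaluated at $\rho=0$, where $(e^{-L\rho}-1)F(\rho)$ is a formal power series in $\rho$ (the factor $e^{-L\rho}-1$ cancels the simple pole) whose coefficients are polynomials in $L$. Here $L$ appearing inside $e^{-L\rho}$ is the variable $L$ of the left-hand side, not the one substituted by the derivative operator. *)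

theory Defs
  imports "HOL-Computational_Algebra.Polynomial" "HOL-Computational_Algebra.Formal_Laurent_Series"
          "HOL-Library.Groups_Big_Fun"
begin

text \<open>Bivariate formal series in x and L are represented as real fps fps:
  the outer variable is L, the coefficients are real power series in x.
  So (P $ b) $ a is the coefficient of x^a L^b.\<close>

text \<open>e^(-L rho) - 1 as a power series in rho with coefficients polynomials in L.\<close>
definition expm1_negL :: "real poly fps" where
  "expm1_negL = Abs_fps (\<lambda>i. if i = 0 then 0 else monom ((-1) ^ i / fact i) i)"

text \<open>(e^(-L rho) - 1) F(rho) for a Laurent series F with at most a simple pole:
  it equals ((e^(-L rho) - 1)/rho) * (rho F(rho)), a power series in rho.\<close>
definition dse_H :: "real fls \<Rightarrow> real poly fps" where
  "dse_H F = fps_shift 1 expm1_negL * Abs_fps (\<lambda>i. [: fls_nth F (int i - 1) :])"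

text \<open>(-d/d rho)^n applied to (e^(-L rho)-1)F(rho), evaluated at rho = 0.\<close>
definition dse_D :: "real fls \<Rightarrow> nat \<Rightarrow> real poly" where
  "dse_D F n = smult ((-1) ^ n * fact n) (dse_H F $ n)"

text \<open>H(x, d/d(-rho))^m (e^(-L rho)-1) F(rho) at rho = 0, where H^m = sum_n c_n(x) L^n:
  the result is sum_n c_n(x) * dse_D F n; the coefficient of x^a L^b is a formal
  (finitely supported) sum over n.\<close>
definition dse_op :: "real fps fps \<Rightarrow> int \<Rightarrow> real fls \<Rightarrow> real fps fps" where
  "dse_op H m F = Abs_fps (\<lambda>b. Abs_fps (\<lambda>a.
      Sum_any (\<lambda>n. ((H powi m) $ n) $ a * coeff (dse_D F n) b)))"

text \<open>sum_{k>=1} x^k H(x, d/d(-rho))^(1+sk) (e^(-L rho)-1) F_k(rho) at rho = 0.\<close>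
definition dse_sum :: "real fps fps \<Rightarrow> int \<Rightarrow> (nat \<Rightarrow> real fls) \<Rightarrow> real fps fps" where
  "dse_sum H s F = Abs_fps (\<lambda>b. Abs_fps (\<lambda>a.
      \<Sum>k = 1..a. (dse_op H (1 + s * int k) (F k) $ b) $ (a - k)))"

end

theory Submission
  imports Defs
begin

text \<open>
  Differentiating in \<open>L\<close>, \<open>\<partial>\<^sub>L (e\<^sup>-\<^sup>L\<^sup>\<rho> - 1) = -\<rho> e\<^sup>-\<^sup>L\<^sup>\<rho>\<close> lowers the order of
  the \<open>\<rho>\<close>-derivatives, so \<open>\<partial>\<^sub>L\<close> of the Dyson-Schwinger sum can be computed by
  differentiating the weights \<open>x\<^sup>k G\<^sup>1\<^sup>+\<^sup>s\<^sup>k\<close> instead. Inserting this into the equation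
  and inducting on the order in \<open>x\<close> gives the renormalization group equation
  \<open>\<partial>\<^sub>L G = c(x) (1 + s x \<partial>\<^sub>x) G\<close>, where \<open>c\<close> is the coefficient of \<open>L\<close> in \<open>G\<close>.
  As \<open>x \<partial>\<^sub>x x\<^sup>k = k x\<^sup>k\<close>, every weight \<open>x\<^sup>k G\<^sup>1\<^sup>+\<^sup>s\<^sup>k\<close> satisfies the same linear first-order equation, hence so does the
  \<open>L\<close>-derivative of the Dyson-Schwinger sum, whatever the \<open>F\<^sub>k\<close> are. The sum is
  therefore determined by its coefficient of \<open>L\<^sup>1\<close>, and the coefficient of \<open>x\<^sup>a L\<^sup>1\<close>
  is \<open>-res F\<^sub>a\<close> plus a term depending only on \<open>F\<^sub>1, \<dots>, F\<^sub>a\<^sub>-\<^sub>1\<close>. So the residues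
  \<open>r\<^sub>k\<close> are found, uniquely, by recursion on \<open>k\<close>.
\<close>

lemma derivation_one:
  fixes d :: "'a::comm_ring_1 \<Rightarrow> 'a"
  assumes leibniz: "\<And>x y. d (x * y) = x * d y + d x * y"
  shows "d 1 = 0"
  using leibniz[of 1 1] by simp

lemma derivation_power:
  fixes d :: "'a::comm_ring_1 \<Rightarrow> 'a"
  assumes leibniz: "\<And>x y. d (x * y) = x * d y + d x * y"
  shows "x * d (x ^ n) = of_nat n * x ^ n * d x"
proof (induction n)
  case 0
  show ?case using derivation_one[OF leibniz] by simp
next
  case (Suc n)
  have "x * d (x ^ Suc n) = x * (x * d (x ^ n)) + x ^ Suc n * d x"
    using leibniz[of x "x ^ n"] by (simp add: algebra_simps)
  also have "\<dots> = of_nat (Suc n) * x ^ Suc n * d x"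
    unfolding Suc.IH by (simp add: algebra_simps)
  finally show ?case .
qed

lemma derivation_power_int:
  fixes d :: "'a::{comm_ring_1,inverse} \<Rightarrow> 'a"
  assumes leibniz: "\<And>x y. d (x * y) = x * d y + d x * y"
    and inverse: "x * inverse x = 1"
  shows "x * d (x powi m) = of_int m * x powi m * d x"
proof (cases "m \<ge> 0")
  case True
  then show ?thesis
    using derivation_power[OF leibniz, of x "nat m"] by (simp add: power_int_def)
next
  case False
  define y where "y = inverse x"
  define n where "n = nat (- m)"
  have xy: "x * y = 1" using inverse by (simp add: y_def)
  have "x * d y + d x * y = 0"
    using leibniz[of x y] derivation_one[OF leibniz] by (simp add: xy)
  then have dy: "x * d y = - (y * d x)" by (simp add: eq_neg_iff_add_eq_0 mult.commute)
  have "x * d (y ^ n) = x * x * (y * d (y ^ n))"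
    by (metis xy mult.assoc mult_1_right)
  also have "\<dots> = of_nat n * y ^ n * (x * d y) * x"
    unfolding derivation_power[OF leibniz] by (simp only: ac_simps)
  also have "\<dots> = - (of_nat n * y ^ n * (x * y) * d x)"
    unfolding dy by (simp add: algebra_simps)
  finally have "x * d (y ^ n) = - (of_nat n * y ^ n * d x)" by (simp add: xy)
  moreover have "x powi m = y ^ n" "(of_int m :: 'a) = - of_nat n"
    using False by (simp_all add: power_int_def y_def n_def)
  ultimately show ?thesis by simp
qed

lemma Sum_any_const_mult:
  fixes c :: "'a::{semiring_0,semiring_no_zero_divisors}"
  shows "c * Sum_any f = Sum_any (\<lambda>n. c * f n)"
proof (cases "c = 0 \<or> finite {n. f n \<noteq> 0}")
  case True
  then show ?thesis using Sum_any_right_distrib by auto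
next
  case False
  then show ?thesis by (simp add: Sum_any.expand_set)
qed

lemma Sum_any_shift:
  assumes "f 0 = 0"
  shows "Sum_any f = Sum_any (\<lambda>n. f (Suc n))"
proof -
  have "{n. f n \<noteq> 0} = Suc ` {n. f (Suc n) \<noteq> 0}"
  proof
    show "{n. f n \<noteq> 0} \<subseteq> Suc ` {n. f (Suc n) \<noteq> 0}"
    proof
      fix n assume n: "n \<in> {n. f n \<noteq> 0}"
      with assms obtain m where "n = Suc m" by (cases n) auto
      with n show "n \<in> Suc ` {n. f (Suc n) \<noteq> 0}" by blast
    qed
  qed auto
  then show ?thesis
    by (simp add: Sum_any.expand_set sum.reindex)
qed

lemma Sum_any_eq_sum_lessThan:
  fixes f :: "nat \<Rightarrow> 'a::comm_monoid_add"
  assumes "\<And>n. N \<le> n \<Longrightarrow> f n = 0"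
  shows "Sum_any f = (\<Sum>n<N. f n)"
proof (rule Sum_any.expand_superset)
  show "{n. f n \<noteq> 0} \<subseteq> {..<N}"
  proof
    fix n assume "n \<in> {n. f n \<noteq> 0}"
    then show "n \<in> {..<N}" using assms[of n] by (cases "N \<le> n") auto
  qed
qed simp

lemma Sum_any_diff:
  fixes f g :: "'b \<Rightarrow> 'a::ab_group_add"
  assumes "finite {n. f n \<noteq> 0}" "finite {n. g n \<noteq> 0}"
  shows "Sum_any (\<lambda>n. f n - g n) = Sum_any f - Sum_any g"
proof -
  define A where "A = {n. f n \<noteq> 0} \<union> {n. g n \<noteq> 0}"
  have A: "finite A" using assms by (simp add: A_def)
  have "Sum_any (\<lambda>n. f n - g n) = (\<Sum>n\<in>A. f n - g n)"
    by (rule Sum_any.expand_superset[OF A]) (auto simp: A_def)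
  moreover have "Sum_any f = sum f A"
    by (rule Sum_any.expand_superset[OF A]) (auto simp: A_def)
  moreover have "Sum_any g = sum g A"
    by (rule Sum_any.expand_superset[OF A]) (auto simp: A_def)
  ultimately show ?thesis by (simp add: sum_subtractf)
qed

section \<open>Series in \<open>x\<close> whose coefficients are polynomials in \<open>L\<close>\<close>

lemma fps_fps_mult_nth:
  "((V * W :: 'a::comm_semiring_1 fps fps) $ n) $ a =
     (\<Sum>j=0..n. \<Sum>i=0..a. V $ j $ i * W $ (n - j) $ (a - i))"
  by (simp add: fps_mult_nth fps_sum_nth)

lemma fps_fps_deriv_nth [simp]:
  "fps_deriv (V :: 'a::comm_ring_1 fps fps) $ n $ a = of_nat (n + 1) * V $ (n + 1) $ a"
  by (simp add: fps_of_nat[symmetric])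

declare fps_deriv_nth [simp del]

definition poly_in_L :: "'a::zero fps fps \<Rightarrow> bool" where
  "poly_in_L V \<longleftrightarrow> (\<forall>a. finite {n. V $ n $ a \<noteq> 0})"

definition x_order_ge :: "'a::zero fps fps \<Rightarrow> nat \<Rightarrow> bool" where
  "x_order_ge V t \<longleftrightarrow> (\<forall>n a. a < t \<longrightarrow> V $ n $ a = 0)"

definition x_euler :: "'a::comm_semiring_1 fps fps \<Rightarrow> 'a fps fps" where
  "x_euler V = Abs_fps (\<lambda>n. Abs_fps (\<lambda>a. of_nat a * V $ n $ a))"

lemma x_euler_nth [simp]: "x_euler V $ n $ a = of_nat a * V $ n $ a"
  by (simp add: x_euler_def)

lemma poly_in_L_bound:
  assumes "poly_in_L V"
  obtains N where "\<And>n i. N \<le> n \<Longrightarrow> i \<le> a \<Longrightarrow> V $ n $ i = 0"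
proof -
  have "finite (\<Union>i\<le>a. {n. V $ n $ i \<noteq> 0})"
    using assms by (simp add: poly_in_L_def)
  then obtain N where N: "\<forall>n \<in> (\<Union>i\<le>a. {n. V $ n $ i \<noteq> 0}). n < N"
    using finite_nat_set_iff_bounded by blast
  show ?thesis
  proof (rule that, rule ccontr)
    fix n i assume "N \<le> n" "i \<le> a" "V $ n $ i \<noteq> 0"
    then show False using N by force
  qed
qed

lemma poly_in_L_finite_support:
  fixes V :: "'a::comm_ring_1 fps fps"
  assumes "poly_in_L V"
  shows "finite {n. V $ n $ a * c n \<noteq> 0}"
proof (rule finite_subset)
  show "finite {n. V $ n $ a \<noteq> 0}" using assms by (simp add: poly_in_L_def)
qed auto

lemma poly_in_L_subset:
  assumes "poly_in_L V" and "\<And>n a. W $ n $ a \<noteq> 0 \<Longrightarrow> V $ n $ a \<noteq> 0"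
  shows "poly_in_L W"
  unfolding poly_in_L_def
proof
  fix a
  have "{n. W $ n $ a \<noteq> 0} \<subseteq> {n. V $ n $ a \<noteq> 0}" using assms(2) by blast
  then show "finite {n. W $ n $ a \<noteq> 0}"
    by (rule finite_subset) (use assms(1) poly_in_L_def in blast)
qed

lemma poly_in_L_fps_const: "poly_in_L (fps_const c)"
  unfolding poly_in_L_def by (auto intro: finite_subset[of _ "{0}"])

lemma poly_in_L_one: "poly_in_L 1"
  using poly_in_L_fps_const[of 1] by simp

lemma poly_in_L_add:
  fixes V W :: "'a::comm_ring_1 fps fps"
  assumes "poly_in_L V" "poly_in_L W"
  shows "poly_in_L (V + W)" "poly_in_L (V - W)"
proof -
  have sub: "{n. (V + W) $ n $ a \<noteq> 0} \<subseteq> {n. V $ n $ a \<noteq> 0} \<union> {n. W $ n $ a \<noteq> 0}"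
       "{n. (V - W) $ n $ a \<noteq> 0} \<subseteq> {n. V $ n $ a \<noteq> 0} \<union> {n. W $ n $ a \<noteq> 0}" for a
    by auto
  have fin: "finite ({n. V $ n $ a \<noteq> 0} \<union> {n. W $ n $ a \<noteq> 0})" for a
    using assms by (simp add: poly_in_L_def)
  show "poly_in_L (V + W)" "poly_in_L (V - W)"
    unfolding poly_in_L_def using finite_subset[OF sub(1) fin] finite_subset[OF sub(2) fin] by blast+
qed

lemma poly_in_L_mult:
  fixes V W :: "'a::comm_ring_1 fps fps"
  assumes "poly_in_L V" "poly_in_L W"
  shows "poly_in_L (V * W)"
  unfolding poly_in_L_def
proof
  fix a
  obtain N1 where N1: "\<And>n i. N1 \<le> n \<Longrightarrow> i \<le> a \<Longrightarrow> V $ n $ i = 0"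
    using poly_in_L_bound[OF assms(1)] by blast
  obtain N2 where N2: "\<And>n i. N2 \<le> n \<Longrightarrow> i \<le> a \<Longrightarrow> W $ n $ i = 0"
    using poly_in_L_bound[OF assms(2)] by blast
  have vanish: "(V * W) $ n $ a = 0" if "N1 + N2 \<le> n" for n
    unfolding fps_fps_mult_nth
  proof (intro sum.neutral ballI)
    fix j i assume "j \<in> {0..n}" "i \<in> {0..a}"
    show "V $ j $ i * W $ (n - j) $ (a - i) = 0"
    proof (cases "N1 \<le> j")
      case True
      then show ?thesis using N1 \<open>i \<in> {0..a}\<close> by simp
    next
      case False
      then have "N2 \<le> n - j" using that by linarith
      then show ?thesis using N2[of "n - j" "a - i"] by simp
    qed
  qed
  have "{n. (V * W) $ n $ a \<noteq> 0} \<subseteq> {..<N1 + N2}"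
    using vanish by (auto simp: not_le[symmetric])
  then show "finite {n. (V * W) $ n $ a \<noteq> 0}"
    by (rule finite_subset) simp
qed

lemma poly_in_L_fps_const_mult:
  fixes V :: "'a::comm_ring_1 fps fps"
  shows "poly_in_L V \<Longrightarrow> poly_in_L (fps_const c * V)"
  by (rule poly_in_L_mult[OF poly_in_L_fps_const])

lemma poly_in_L_power:
  fixes V :: "'a::comm_ring_1 fps fps"
  shows "poly_in_L V \<Longrightarrow> poly_in_L (V ^ n)"
  by (induction n) (simp_all add: poly_in_L_one poly_in_L_mult)

lemma poly_in_L_fps_deriv:
  fixes V :: "'a::comm_ring_1 fps fps"
  assumes "poly_in_L V"
  shows "poly_in_L (fps_deriv V)"
  unfolding poly_in_L_def
proof
  fix a
  have "finite (Suc -` {n. V $ n $ a \<noteq> 0})"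
    using assms by (intro finite_vimageI) (auto simp: poly_in_L_def)
  then show "finite {n. fps_deriv V $ n $ a \<noteq> 0}"
    by (rule finite_subset[rotated]) auto
qed

lemma poly_in_L_x_euler:
  fixes V :: "'a::comm_ring_1 fps fps"
  shows "poly_in_L V \<Longrightarrow> poly_in_L (x_euler V)"
  by (erule poly_in_L_subset) auto

lemma poly_in_L_approx:
  fixes V :: "'a::comm_ring_1 fps fps"
  assumes "\<And>a. \<exists>W. poly_in_L W \<and> x_order_ge (V - W) (Suc a)"
  shows "poly_in_L V"
  unfolding poly_in_L_def
proof
  fix a
  obtain W where W: "poly_in_L W" "x_order_ge (V - W) (Suc a)" using assms by blast
  then have "V $ n $ a = W $ n $ a" for n by (simp add: x_order_ge_def)
  then show "finite {n. V $ n $ a \<noteq> 0}" using W(1) by (simp add: poly_in_L_def)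
qed

lemma x_order_ge_mono: "x_order_ge V t \<Longrightarrow> t' \<le> t \<Longrightarrow> x_order_ge V t'"
  unfolding x_order_ge_def by auto

lemma x_order_ge_all_imp_eq_0: "(\<And>t. x_order_ge V t) \<Longrightarrow> V = 0"
  by (intro fps_ext) (auto simp: x_order_ge_def)

lemma x_order_ge_add:
  fixes V W :: "'a::comm_ring_1 fps fps"
  shows "x_order_ge V t \<Longrightarrow> x_order_ge W t \<Longrightarrow> x_order_ge (V + W) t"
  unfolding x_order_ge_def by auto

lemma x_order_ge_mult:
  fixes V W :: "'a::comm_ring_1 fps fps"
  assumes "x_order_ge V p" "x_order_ge W q"
  shows "x_order_ge (V * W) (p + q)"
  unfolding x_order_ge_def fps_fps_mult_nth
proof (intro allI impI sum.neutral ballI)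
  fix n a j i assume "a < p + q" "i \<in> {0..a}"
  show "V $ j $ i * W $ (n - j) $ (a - i) = 0"
  proof (cases "i < p")
    case True
    then show ?thesis using assms(1) by (simp add: x_order_ge_def)
  next
    case False
    then have "a - i < q" using \<open>a < p + q\<close> \<open>i \<in> {0..a}\<close> by auto
    then show ?thesis using assms(2) by (simp add: x_order_ge_def)
  qed
qed

lemma x_order_ge_mult_left:
  fixes V W :: "'a::comm_ring_1 fps fps"
  assumes "x_order_ge W t"
  shows "x_order_ge (V * W) t"
proof -
  have "x_order_ge V 0" by (simp add: x_order_ge_def)
  from x_order_ge_mult[OF this assms] show ?thesis by simp
qed

lemma x_order_ge_mult_right:
  fixes V W :: "'a::comm_ring_1 fps fps"
  assumes "x_order_ge V t"
  shows "x_order_ge (V * W) t"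
  using x_order_ge_mult_left[OF assms, of W] by (simp add: mult.commute)

lemma x_order_ge_power:
  fixes H :: "'a::comm_ring_1 fps fps"
  assumes "x_order_ge H 1"
  shows "x_order_ge (H ^ n) n"
proof (induction n)
  case 0
  then show ?case by (simp add: x_order_ge_def)
next
  case (Suc n)
  then show ?case using x_order_ge_mult[OF assms Suc.IH] by simp
qed

lemma x_order_ge_fps_const_X_power: "x_order_ge (fps_const (fps_X ^ k)) k"
  by (simp add: x_order_ge_def fps_X_power_nth)

lemma x_order_ge_x_euler:
  fixes V :: "'a::comm_ring_1 fps fps"
  shows "x_order_ge V t \<Longrightarrow> x_order_ge (x_euler V) t"
  by (simp add: x_order_ge_def)

lemma x_order_ge_of_fps_deriv:
  fixes V :: "real fps fps"
  assumes "x_order_ge (fps_deriv V) t" and "V $ 0 = 0"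
  shows "x_order_ge V t"
  unfolding x_order_ge_def
proof (intro allI impI)
  fix n a assume "a < t"
  then show "V $ n $ a = 0"
    using assms unfolding x_order_ge_def by (cases n) (auto simp del: of_nat_Suc)
qed

lemma x_euler_mult:
  fixes V W :: "'a::comm_ring_1 fps fps"
  shows "x_euler (V * W) = V * x_euler W + x_euler V * W"
proof (intro fps_ext)
  fix n a
  have "x_euler (V * W) $ n $ a =
      (\<Sum>j=0..n. \<Sum>i=0..a. V $ j $ i * (of_nat (a - i) * W $ (n - j) $ (a - i))
                           + of_nat i * V $ j $ i * W $ (n - j) $ (a - i))"
    unfolding x_euler_nth fps_fps_mult_nth sum_distrib_left
    by (intro sum.cong refl) (simp add: of_nat_diff algebra_simps)
  also have "\<dots> = (V * x_euler W + x_euler V * W) $ n $ a"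
    by (simp add: fps_fps_mult_nth sum.distrib)
  finally show "x_euler (V * W) $ n $ a = (V * x_euler W + x_euler V * W) $ n $ a" .
qed

lemma x_const_one_nth:
  fixes G :: "'a::comm_ring_1 fps fps"
  assumes "x_order_ge (G - 1) 1"
  shows "G $ n $ 0 = (if n = 0 then 1 else 0)"
  using assms by (cases n) (auto simp: x_order_ge_def dest!: spec[of _ n])

lemma power_x_const_one:
  fixes G :: "'a::comm_ring_1 fps fps"
  assumes "x_order_ge (G - 1) 1"
  shows "x_order_ge (G ^ n - 1) 1"
proof (induction n)
  case (Suc n)
  have "G ^ Suc n - 1 = G * (G ^ n - 1) + (G - 1)" by (simp add: algebra_simps)
  then show ?case by (metis x_order_ge_add[OF x_order_ge_mult_left[OF Suc.IH] assms])
qed (simp add: x_order_ge_def)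

lemma x_const_one_mult_inverse:
  fixes G :: "real fps fps"
  assumes "x_order_ge (G - 1) 1"
  shows "G * inverse G = 1"
proof -
  have "G $ 0 * inverse (G $ 0) = 1"
    using x_const_one_nth[OF assms, of 0] by (intro inverse_mult_eq_1') simp
  then show ?thesis
    using fps_right_inverse[of G "inverse (G $ 0)"] by (simp add: fps_inverse_def)
qed

lemma inverse_neumann_approx:
  fixes G :: "real fps fps"
  assumes "G * inverse G = 1"
  shows "inverse G = (\<Sum>m\<le>a. (1 - G) ^ m) + (1 - G) ^ Suc a * inverse G"
proof (induction a)
  case 0
  show ?case using assms by (simp add: algebra_simps)
next
  case (Suc a)
  have "inverse G = 1 + (1 - G) * inverse G" using assms by (simp add: algebra_simps)
  then have "(1 - G) ^ Suc a * inverse G = (1 - G) ^ Suc a * (1 + (1 - G) * inverse G)"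
    by (rule arg_cong)
  also have "\<dots> = (1 - G) ^ Suc a + (1 - G) ^ Suc (Suc a) * inverse G"
    by (simp only: distrib_left mult_1_right power_Suc2 mult.assoc)
  finally show ?case using Suc.IH by (simp only: sum.atMost_Suc add.assoc)
qed

lemma x_order_ge_inverse_sub_neumann:
  fixes G :: "real fps fps"
  assumes "x_order_ge (G - 1) 1"
  shows "x_order_ge (inverse G - (\<Sum>m\<le>a. (1 - G) ^ m)) (Suc a)"
proof -
  have "x_order_ge (1 - G) 1"
    using assms by (simp add: x_order_ge_def)
  moreover have "inverse G - (\<Sum>m\<le>a. (1 - G) ^ m) = (1 - G) ^ Suc a * inverse G"
    using inverse_neumann_approx[OF x_const_one_mult_inverse[OF assms], of a]
    by (metis add_diff_cancel_left')
  ultimately show ?thesis using x_order_ge_mult_right[OF x_order_ge_power] by metis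
qed

lemma inverse_x_const_one:
  fixes G :: "real fps fps"
  assumes "x_order_ge (G - 1) 1"
  shows "x_order_ge (inverse G - 1) 1"
  using x_order_ge_inverse_sub_neumann[OF assms, of 0] by simp

lemma poly_in_L_inverse:
  fixes G :: "real fps fps"
  assumes "x_order_ge (G - 1) 1" and "poly_in_L G"
  shows "poly_in_L (inverse G)"
proof (rule poly_in_L_approx)
  have "poly_in_L (1 - G)" using assms(2) by (intro poly_in_L_add poly_in_L_one)
  then have "poly_in_L (\<Sum>m\<le>a. (1 - G) ^ m)" for a
    by (induction a) (simp_all add: poly_in_L_one poly_in_L_add poly_in_L_mult poly_in_L_power)
  then show "\<exists>W. poly_in_L W \<and> x_order_ge (inverse G - W) (Suc a)" for a
    using x_order_ge_inverse_sub_neumann[OF assms(1)] by blast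
qed

lemma power_int_x_const_one:
  fixes G :: "real fps fps"
  assumes "x_order_ge (G - 1) 1"
  shows "x_order_ge (G powi m - 1) 1"
  using power_x_const_one[OF assms] power_x_const_one[OF inverse_x_const_one[OF assms]]
  by (simp add: power_int_def)

lemma poly_in_L_power_int:
  fixes G :: "real fps fps"
  assumes "x_order_ge (G - 1) 1" and "poly_in_L G"
  shows "poly_in_L (G powi m)"
  using poly_in_L_power assms poly_in_L_inverse[OF assms] by (auto simp: power_int_def)

lemma x_order_ge_cancel_left:
  fixes G Z :: "real fps fps"
  assumes "x_order_ge (G - 1) 1" and "x_order_ge (G * Z) t"
  shows "x_order_ge Z t"
proof -
  have "Z = inverse G * (G * Z)"
    using x_const_one_mult_inverse[OF assms(1)] by (simp add: mult.assoc[symmetric] mult.commute)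
  then show ?thesis using x_order_ge_mult_left[OF assms(2)] by metis
qed

lemma L_series_props:
  fixes \<gamma> :: "nat \<Rightarrow> real fps" and G :: "real fps fps" and \<sigma> :: int
  assumes \<gamma>_const: "\<forall>n\<ge>1. \<gamma> n $ 0 = 0" and \<gamma>_fin: "\<forall>a. finite {n. \<gamma> n $ a \<noteq> 0}"
    and G: "G = Abs_fps (\<lambda>n. if n = 0 then 1 else of_int \<sigma> * \<gamma> n)"
  shows "x_order_ge (G - 1) 1" and "poly_in_L G" and "G $ 0 = 1"
proof -
  have G_nth: "G $ n $ a = (if n = 0 then 1 $ a else of_int \<sigma> * \<gamma> n $ a)" for n a
    by (simp add: G flip: fps_of_int)
  show "x_order_ge (G - 1) 1" using \<gamma>_const by (simp add: x_order_ge_def G_nth)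
  have "{n. G $ n $ a \<noteq> 0} \<subseteq> insert 0 {n. \<gamma> n $ a \<noteq> 0}" for a by (auto simp: G_nth)
  then show "poly_in_L G"
    unfolding poly_in_L_def using \<gamma>_fin finite_subset finite_insert by metis
  show "G $ 0 = 1" by (simp add: G)
qed

section \<open>The Dyson-Schwinger sum\<close>

lemma coeff_dse_D:
  "coeff (dse_D F n) b =
     (if 1 \<le> b \<and> b \<le> Suc n then (-1) ^ (n + b) * fact n / fact b * fls_nth F (int n - int b) else 0)"
proof -
  have "coeff (dse_H F $ n) b =
     (\<Sum>j=0..n. if j = b - 1 \<and> 1 \<le> b then (-1) ^ b / fact b * fls_nth F (int n - int b) else 0)"
    unfolding dse_H_def fps_mult_nth coeff_sum
    by (intro sum.cong refl) (auto simp: expm1_negL_def of_nat_diff)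
  also have "\<dots> = (if 1 \<le> b \<and> b \<le> Suc n then (-1) ^ b / fact b * fls_nth F (int n - int b) else 0)"
    by (auto simp: sum.delta)
  finally show ?thesis by (simp add: dse_D_def power_add)
qed

text \<open>
  Since \<open>\<partial>\<^sub>L (e\<^sup>-\<^sup>L\<^sup>\<rho> - 1) F(\<rho>) = -\<rho> e\<^sup>-\<^sup>L\<^sup>\<rho> F(\<rho>)\<close>, the derivative \<open>\<partial>\<^sub>L\<close> turns
  \<open>dse_D F n\<close> into \<open>n \<cdot> dse_D F (n - 1)\<close> up to a constant in \<open>L\<close>; the second
  derivative removes that constant.
\<close>
lemma pderiv_pderiv_dse_D:
  "pderiv (pderiv (dse_D F n)) = smult (of_nat n) (pderiv (dse_D F (n - 1)))"
proof (rule poly_eqI)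
  fix b
  show "coeff (pderiv (pderiv (dse_D F n))) b = coeff (smult (of_nat n) (pderiv (dse_D F (n - 1)))) b"
  proof (cases n)
    case (Suc m)
    have "fls_nth F (int (Suc m) - int (Suc (Suc b))) = fls_nth F (int m - int (Suc b))"
      by (simp add: algebra_simps)
    then show ?thesis
      by (simp add: Suc coeff_pderiv coeff_dse_D fact_Suc field_simps power_add del: of_nat_Suc)
  qed (simp add: coeff_pderiv coeff_dse_D)
qed

text \<open>
  The sum over \<open>k\<close> stops at the \<open>x\<close>-degree, which
  loses nothing as long as \<open>V\<^sub>k\<close> has \<open>x\<close>-order at least \<open>k\<close>.
\<close>
definition dse_eval :: "(nat \<Rightarrow> real fps fps) \<Rightarrow> (nat \<Rightarrow> nat \<Rightarrow> real poly) \<Rightarrow> real fps fps" where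
  "dse_eval V Q = Abs_fps (\<lambda>b. Abs_fps (\<lambda>a.
     \<Sum>k = 1..a. Sum_any (\<lambda>n. V k $ n $ a * coeff (Q k n) b)))"

lemma dse_eval_nth [simp]:
  "dse_eval V Q $ b $ a = (\<Sum>k = 1..a. Sum_any (\<lambda>n. V k $ n $ a * coeff (Q k n) b))"
  by (simp add: dse_eval_def)

definition dse_weight :: "real fps fps \<Rightarrow> int \<Rightarrow> nat \<Rightarrow> real fps fps" where
  "dse_weight G s k = fps_const (fps_X ^ k) * G powi (1 + s * int k)"

lemma dse_sum_eq_dse_eval: "dse_sum G s F = dse_eval (dse_weight G s) (\<lambda>k. dse_D (F k))"
  by (intro fps_ext)
    (auto intro!: sum.cong simp: dse_sum_def dse_op_def dse_weight_def fps_X_power_mult_nth)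

lemma dse_weight_props:
  fixes G :: "real fps fps"
  assumes "x_order_ge (G - 1) 1" and "poly_in_L G"
  shows "poly_in_L (dse_weight G s k)" and "x_order_ge (dse_weight G s k) k"
  unfolding dse_weight_def
  by (rule poly_in_L_fps_const_mult[OF poly_in_L_power_int[OF assms]])
    (rule x_order_ge_mult_right[OF x_order_ge_fps_const_X_power])

lemma dse_eval_zero [simp]: "dse_eval (\<lambda>k. 0) Q = 0"
  by (intro fps_ext) simp

lemma x_order_ge_dse_eval:
  "(\<And>k. 1 \<le> k \<Longrightarrow> x_order_ge (V k) t) \<Longrightarrow> x_order_ge (dse_eval V Q) t"
  by (simp add: x_order_ge_def)

lemma fps_deriv_dse_eval: "fps_deriv (dse_eval V Q) = dse_eval V (\<lambda>k n. pderiv (Q k n))"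
  by (intro fps_ext) (simp add: coeff_pderiv sum_distrib_left Sum_any_const_mult algebra_simps)

lemma dse_eval_pderiv_lower:
  assumes "\<And>k n. pderiv (Q k n) = smult (of_nat n) (R k (n - 1))"
  shows "dse_eval V (\<lambda>k n. pderiv (Q k n)) = dse_eval (\<lambda>k. fps_deriv (V k)) R"
proof (intro fps_ext)
  fix b a
  have "Sum_any (\<lambda>n. V k $ n $ a * coeff (pderiv (Q k n)) b) =
        Sum_any (\<lambda>n. fps_deriv (V k) $ n $ a * coeff (R k n) b)" for k
    by (subst Sum_any_shift) (simp_all add: assms algebra_simps)
  then show "dse_eval V (\<lambda>k n. pderiv (Q k n)) $ b $ a = dse_eval (\<lambda>k. fps_deriv (V k)) R $ b $ a"
    by simp
qed

lemma fps_deriv_dse_sum: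
  "fps_deriv (dse_sum G s F) = dse_eval (dse_weight G s) (\<lambda>k n. pderiv (dse_D (F k) n))"
  unfolding dse_sum_eq_dse_eval fps_deriv_dse_eval ..

lemma fps_deriv_dse_eval_dse_D:
  "fps_deriv (dse_eval V (\<lambda>k n. pderiv (dse_D (F k) n))) =
     dse_eval (\<lambda>k. fps_deriv (V k)) (\<lambda>k n. pderiv (dse_D (F k) n))"
  unfolding fps_deriv_dse_eval by (rule dse_eval_pderiv_lower) (rule pderiv_pderiv_dse_D)

lemma x_euler_dse_eval: "x_euler (dse_eval V Q) = dse_eval (\<lambda>k. x_euler (V k)) Q"
  by (intro fps_ext) (simp add: sum_distrib_left Sum_any_const_mult mult.assoc)

lemma dse_eval_diff:
  assumes "\<And>k. poly_in_L (V k)" "\<And>k. poly_in_L (W k)"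
  shows "dse_eval (\<lambda>k. V k - W k) Q = dse_eval V Q - dse_eval W Q"
proof (intro fps_ext)
  fix b a
  have "Sum_any (\<lambda>n. (V k $ n $ a - W k $ n $ a) * coeff (Q k n) b) =
        Sum_any (\<lambda>n. V k $ n $ a * coeff (Q k n) b) - Sum_any (\<lambda>n. W k $ n $ a * coeff (Q k n) b)" for k
    unfolding left_diff_distrib by (intro Sum_any_diff poly_in_L_finite_support assms)
  then show "dse_eval (\<lambda>k. V k - W k) Q $ b $ a = (dse_eval V Q - dse_eval W Q) $ b $ a"
    by (simp add: sum_subtractf)
qed

lemma Sum_any_fps_const_mult_nth:
  fixes W :: "real fps fps"
  assumes "poly_in_L W"
  shows "(\<Sum>j=0..a. c $ j * Sum_any (\<lambda>n. W $ n $ (a - j) * q n)) =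
         Sum_any (\<lambda>n. (fps_const c * W) $ n $ a * q n)"
proof -
  obtain N where N: "\<And>n i. N \<le> n \<Longrightarrow> i \<le> a \<Longrightarrow> W $ n $ i = 0"
    using poly_in_L_bound[OF assms] by blast
  have "(\<Sum>j=0..a. c $ j * Sum_any (\<lambda>n. W $ n $ (a - j) * q n)) =
        (\<Sum>j=0..a. \<Sum>n<N. c $ j * (W $ n $ (a - j) * q n))"
    by (intro sum.cong refl) (simp add: Sum_any_eq_sum_lessThan[of N] N sum_distrib_left)
  also have "\<dots> = (\<Sum>n<N. \<Sum>j=0..a. c $ j * (W $ n $ (a - j) * q n))"
    by (rule sum.swap)
  also have "\<dots> = Sum_any (\<lambda>n. (fps_const c * W) $ n $ a * q n)"
    by (simp only: fps_mult_left_const_nth)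
      (simp add: Sum_any_eq_sum_lessThan[of N] N fps_mult_nth sum_distrib_right mult.assoc)
  finally show ?thesis .
qed

lemma dse_eval_fps_const_mult:
  assumes "\<And>k. poly_in_L (V k)" "\<And>k. x_order_ge (V k) k"
  shows "fps_const c * dse_eval V Q = dse_eval (\<lambda>k. fps_const c * V k) Q"
proof (intro fps_ext)
  fix b a
  define S where "S k i = Sum_any (\<lambda>n. V k $ n $ i * coeff (Q k n) b)" for k i
  have S0: "S k i = 0" if "i < k" for k i
    using assms(2)[of k] that by (simp add: S_def x_order_ge_def)
  have "(fps_const c * dse_eval V Q) $ b $ a = (\<Sum>j=0..a. c $ j * (\<Sum>k=1..a-j. S k (a - j)))"
    by (simp only: fps_mult_left_const_nth) (simp add: fps_mult_nth S_def)
  also have "\<dots> = (\<Sum>j=0..a. \<Sum>k=1..a. c $ j * S k (a - j))"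
    unfolding sum_distrib_left
    by (intro sum.cong refl sum.mono_neutral_left) (auto simp: S0)
  also have "\<dots> = (\<Sum>k=1..a. \<Sum>j=0..a. c $ j * S k (a - j))"
    by (rule sum.swap)
  also have "\<dots> = dse_eval (\<lambda>k. fps_const c * V k) Q $ b $ a"
    by (simp add: S_def Sum_any_fps_const_mult_nth assms(1))
  finally show "(fps_const c * dse_eval V Q) $ b $ a = dse_eval (\<lambda>k. fps_const c * V k) Q $ b $ a" .
qed

section \<open>The renormalization group equation\<close>

definition rg_defect :: "real fps \<Rightarrow> int \<Rightarrow> real fps fps \<Rightarrow> real fps fps" where
  "rg_defect c s V = fps_deriv V - fps_const c * (V + of_int s * x_euler V)"

lemma rg_defect_diff: "rg_defect c s (V - W) = rg_defect c s V - rg_defect c s W"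
proof -
  have "x_euler (V - W) = x_euler V - x_euler W"
    by (intro fps_ext) (simp add: algebra_simps)
  then show ?thesis unfolding rg_defect_def by (simp only:) (simp add: algebra_simps)
qed

lemma rg_defect_of_int_mult: "rg_defect c s (of_int z * V) = of_int z * rg_defect c s V"
proof -
  have "x_euler (of_int z * V) = of_int z * x_euler V"
    by (intro fps_ext) simp
  moreover have "fps_deriv (of_int z * V) = of_int z * fps_deriv V"
    by (simp flip: fps_of_int)
  ultimately show ?thesis by (simp add: rg_defect_def algebra_simps)
qed

lemma fps_deriv_rg_defect: "fps_deriv (rg_defect c s V) = rg_defect c s (fps_deriv V)"
proof -
  have "fps_deriv (x_euler V) = x_euler (fps_deriv V)"
    by (intro fps_ext) (simp add: algebra_simps)
  then show ?thesis by (simp add: rg_defect_def flip: fps_of_int)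
qed

lemma rg_defect_eq_0_imp_eq_0:
  assumes rg: "rg_defect c s Y = 0" and Y0: "Y $ 0 = 0"
  shows "Y = 0"
proof (rule fps_ext)
  fix n
  show "Y $ n = 0 $ n"
  proof (induction n)
    case (Suc n)
    have "x_euler Y $ n = 0" using Suc.IH by (intro fps_ext) simp
    then have "of_nat (Suc n) * Y $ Suc n = 0"
      using arg_cong[OF rg, of "\<lambda>V. V $ n"] Suc.IH
      by (simp add: rg_defect_def fps_deriv_nth flip: fps_of_int)
    then show ?case by (simp del: of_nat_Suc)
  qed (simp add: Y0)
qed

lemma rg_defect_dse_eval:
  assumes "\<And>k. poly_in_L (V k)" and "\<And>k. x_order_ge (V k) k"
  shows "rg_defect c s (dse_eval V (\<lambda>k n. pderiv (dse_D (F k) n))) =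
           dse_eval (\<lambda>k. rg_defect c s (V k)) (\<lambda>k n. pderiv (dse_D (F k) n))"
proof -
  define P where "P = (\<lambda>k n. pderiv (dse_D (F k) n))"
  define C where "C = (fps_const c :: real fps fps)"
  define sV where "sV k = fps_const (of_int s) * x_euler (V k)" for k
  have sV: "poly_in_L (sV k)" "x_order_ge (sV k) k" for k
    unfolding sV_def using assms
    by (simp_all add: poly_in_L_fps_const_mult poly_in_L_x_euler x_order_ge_mult_left x_order_ge_x_euler)
  have CV: "poly_in_L (C * V k)" "poly_in_L (C * sV k)" for k
    unfolding C_def using assms sV by (simp_all add: poly_in_L_fps_const_mult)
  have sE: "fps_const (of_int s) * x_euler (dse_eval V P) = dse_eval sV P"
    unfolding x_euler_dse_eval sV_def using assms
    by (intro dse_eval_fps_const_mult) (simp_all add: poly_in_L_x_euler x_order_ge_x_euler)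
  have "rg_defect c s (dse_eval V P) =
      fps_deriv (dse_eval V P) - C * dse_eval V P - C * (fps_const (of_int s) * x_euler (dse_eval V P))"
    by (simp add: rg_defect_def C_def algebra_simps fps_of_int)
  also have "\<dots> = dse_eval (\<lambda>k. fps_deriv (V k)) P - dse_eval (\<lambda>k. C * V k) P - dse_eval (\<lambda>k. C * sV k) P"
    unfolding sE unfolding P_def fps_deriv_dse_eval_dse_D C_def
    using assms sV by (simp add: dse_eval_fps_const_mult)
  also have "\<dots> = dse_eval (\<lambda>k. fps_deriv (V k) - C * V k - C * sV k) P"
    using assms CV by (simp add: dse_eval_diff poly_in_L_fps_deriv poly_in_L_add)
  also have "\<dots> = dse_eval (\<lambda>k. rg_defect c s (V k)) P"
    by (simp add: rg_defect_def C_def sV_def algebra_simps fps_of_int)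
  finally show ?thesis unfolding P_def .
qed

text \<open>
  Both \<open>\<partial>\<^sub>L\<close> and \<open>x \<partial>\<^sub>x\<close> are derivations and \<open>x \<partial>\<^sub>x x\<^sup>k = k x\<^sup>k\<close>; the extra \<open>s k\<close>
  from the factor \<open>x\<^sup>k\<close> is exactly what turns the prefactor \<open>1\<close> into the exponent
  \<open>m = 1 + s k\<close> of \<open>G\<close>.
\<close>
lemma rg_defect_dse_weight:
  fixes G :: "real fps fps"
  assumes "G * inverse G = 1"
  shows "G * rg_defect c s (dse_weight G s k) =
           fps_const (fps_X ^ k) * (of_int (1 + s * int k) * (G powi (1 + s * int k) * rg_defect c s G))"
proof -
  define m where "m = 1 + s * int k"
  define P where "P = G powi m"
  define X where "X = (fps_const (fps_X ^ k) :: real fps fps)"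
  define C where "C = (fps_const c :: real fps fps)"
  have dP: "G * fps_deriv P = of_int m * P * fps_deriv G"
    unfolding P_def by (rule derivation_power_int[OF fps_deriv_mult assms])
  have eP: "G * x_euler P = of_int m * P * x_euler G"
    unfolding P_def by (rule derivation_power_int[OF x_euler_mult assms])
  have eX: "x_euler X = of_nat k * X"
    by (intro fps_ext) (simp add: X_def fps_X_power_nth)
  have m: "(of_int m :: real fps fps) = 1 + of_int s * of_nat k"
    by (simp add: m_def)
  have "G * rg_defect c s (X * P) =
      X * (G * fps_deriv P) - C * (X * (G * P) + of_int s * (X * (G * x_euler P) + of_nat k * X * (G * P)))"
    unfolding rg_defect_def x_euler_mult eX by (simp add: X_def C_def algebra_simps)
  also have "\<dots> = X * (of_int m * (P * rg_defect c s G))"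
    unfolding dP eP rg_defect_def m C_def by (simp add: algebra_simps)
  finally show ?thesis unfolding X_def P_def m_def dse_weight_def .
qed

lemma rg_defect_dse_weight_eq_0:
  fixes G :: "real fps fps"
  assumes G1: "x_order_ge (G - 1) 1" and rg: "rg_defect c s G = 0"
  shows "rg_defect c s (dse_weight G s k) = 0"
proof -
  have "G * rg_defect c s (dse_weight G s k) = 0"
    unfolding rg_defect_dse_weight[OF x_const_one_mult_inverse[OF G1]] rg by simp
  moreover have "G \<noteq> 0" using x_const_one_nth[OF G1, of 0] by auto
  ultimately show ?thesis by simp
qed

text \<open>
  Writing \<open>R\<close> for the defect of \<open>G\<close>, \<open>\<partial>\<^sub>L R\<close> is a combination of the defects of the
  weights, which are \<open>x\<^sup>k\<close> times multiples of \<open>R\<close>; so every order of \<open>x\<close> at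
  which \<open>R\<close> vanishes yields one more for \<open>\<partial>\<^sub>L R\<close>, hence for \<open>R\<close>.
\<close>
lemma dse_rg_equation:
  fixes G :: "real fps fps"
  assumes G1: "x_order_ge (G - 1) 1" and GL: "poly_in_L G" and G0: "G $ 0 = 1"
    and dse: "G = 1 + of_int z * dse_sum G s F"
  shows "rg_defect (G $ 1) s G = 0"
proof -
  define P where "P = (\<lambda>k n. pderiv (dse_D (F k) n))"
  define U where "U = dse_weight G s"
  define R where "R = rg_defect (G $ 1) s G"
  have U: "poly_in_L (U k)" "x_order_ge (U k) k" for k
    unfolding U_def using dse_weight_props[OF G1 GL] by blast+
  have dG: "fps_deriv G = of_int z * dse_eval U P"
    by (subst dse) (simp add: U_def P_def fps_deriv_dse_sum flip: fps_of_int)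
  have dR: "fps_deriv R = of_int z * dse_eval (\<lambda>k. rg_defect (G $ 1) s (U k)) P"
    unfolding R_def fps_deriv_rg_defect dG rg_defect_of_int_mult P_def rg_defect_dse_eval[OF U] ..
  have "x_euler G $ 0 = 0" by (intro fps_ext) (simp add: G0)
  then have R0: "R $ 0 = 0" by (simp add: R_def rg_defect_def G0 fps_deriv_nth)
  have "x_order_ge R t" for t
  proof (induction t)
    case 0
    show ?case by (simp add: x_order_ge_def)
  next
    case (Suc t)
    have "x_order_ge (rg_defect (G $ 1) s (U k)) (Suc t)" if k: "1 \<le> k" for k
    proof -
      have "x_order_ge (G * rg_defect (G $ 1) s (U k)) (k + t)"
        unfolding U_def rg_defect_dse_weight[OF x_const_one_mult_inverse[OF G1]] R_def[symmetric]
        by (intro x_order_ge_mult x_order_ge_fps_const_X_power x_order_ge_mult_left Suc.IH)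
      then have "x_order_ge (rg_defect (G $ 1) s (U k)) (k + t)"
        by (rule x_order_ge_cancel_left[OF G1])
      then show ?thesis by (rule x_order_ge_mono) (use k in simp)
    qed
    then have "x_order_ge (fps_deriv R) (Suc t)"
      unfolding dR by (intro x_order_ge_mult_left x_order_ge_dse_eval)
    then show ?case using R0 by (rule x_order_ge_of_fps_deriv)
  qed
  then show ?thesis unfolding R_def by (rule x_order_ge_all_imp_eq_0)
qed

section \<open>Determination by the coefficient of \<open>L\<close>\<close>

lemma dse_sum_nth_0: "dse_sum G s F $ 0 = 0"
  by (intro fps_ext) (simp add: dse_sum_def dse_op_def coeff_dse_D)

lemma dse_sum_cong: "(\<And>k. 1 \<le> k \<Longrightarrow> F k = F' k) \<Longrightarrow> dse_sum G s F = dse_sum G s F'"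
  by (intro fps_ext) (auto intro!: sum.cong simp: dse_sum_def)

lemma dse_sum_eq_if_L1_coeff_eq:
  fixes G :: "real fps fps"
  assumes G1: "x_order_ge (G - 1) 1" and GL: "poly_in_L G" and rg: "rg_defect c s G = 0"
    and L1: "dse_sum G s F1 $ 1 = dse_sum G s F2 $ 1"
  shows "dse_sum G s F1 = dse_sum G s F2"
proof -
  define U where "U = dse_weight G s"
  have U: "poly_in_L (U k)" "x_order_ge (U k) k" for k
    unfolding U_def using dse_weight_props[OF G1 GL] by blast+
  have TU: "rg_defect c s (U k) = 0" for k
    unfolding U_def by (rule rg_defect_dse_weight_eq_0[OF G1 rg])
  define Y where "Y = fps_deriv (dse_sum G s F1) - fps_deriv (dse_sum G s F2)"
  have "rg_defect c s Y = 0"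
    unfolding Y_def fps_deriv_dse_sum U_def[symmetric] rg_defect_diff rg_defect_dse_eval[OF U] TU
    by simp
  moreover have "Y $ 0 = 0" using L1 by (simp add: Y_def fps_deriv_nth)
  ultimately have "Y = 0" by (rule rg_defect_eq_0_imp_eq_0)
  then show ?thesis by (simp add: Y_def fps_deriv_eq_iff dse_sum_nth_0)
qed

lemma dse_sum_L1_coeff_triangular:
  fixes G :: "real fps fps"
  assumes G1: "x_order_ge (G - 1) 1" and a: "1 \<le> a"
    and agree: "\<And>k. 1 \<le> k \<Longrightarrow> k < a \<Longrightarrow> F k = F' k"
  shows "dse_sum G s F $ 1 $ a + fls_nth (F a) (-1) = dse_sum G s F' $ 1 $ a + fls_nth (F' a) (-1)"
proof -
  define T where "T H k = Sum_any (\<lambda>n. G powi (1 + s * int k) $ n $ (a - k) * coeff (dse_D H n) 1)"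
    for H k
  have P: "G powi (1 + s * int a) $ n $ 0 = (if n = 0 then 1 else 0)" for n
    by (rule x_const_one_nth[OF power_int_x_const_one[OF G1]])
  have top: "T H a = - fls_nth H (-1)" for H
  proof -
    have "T H a = Sum_any (\<lambda>n::nat. if n = 0 then coeff (dse_D H 0) 1 else 0)"
      unfolding T_def diff_self_eq_0 P by (intro arg_cong[where f = Sum_any] ext) simp
    then show ?thesis by (simp add: coeff_dse_D)
  qed
  obtain a' where a': "a = Suc a'" using a by (cases a) auto
  have "dse_sum G s H $ 1 $ a = (\<Sum>k=1..a'. T (H k) k) + T (H a) a" for H
    by (simp add: dse_sum_def dse_op_def T_def a')
  moreover have "(\<Sum>k=1..a'. T (F k) k) = (\<Sum>k=1..a'. T (F' k) k)"
    using agree by (intro sum.cong) (auto simp: a')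
  ultimately show ?thesis by (simp add: top)
qed

lemma ex1_fixpoint_nat_less:
  fixes \<phi> :: "(nat \<Rightarrow> 'a) \<Rightarrow> nat \<Rightarrow> 'a"
  assumes local: "\<And>r r' a. (\<And>k. k < a \<Longrightarrow> r k = r' k) \<Longrightarrow> \<phi> r a = \<phi> r' a"
  shows "\<exists>!r. \<forall>a. r a = \<phi> r a"
proof (rule ex1I)
  have "adm_wf less_than \<phi>"
    unfolding adm_wf_def
  proof (intro allI impI)
    fix f g :: "nat \<Rightarrow> 'a" and x assume "\<forall>z. (z, x) \<in> less_than \<longrightarrow> f z = g z"
    then show "\<phi> f x = \<phi> g x" by (intro local) simp
  qed
  then have wfrec_eq: "wfrec less_than \<phi> = \<phi> (wfrec less_than \<phi>)"
    by (rule wfrec_fixpoint[OF wf_less_than])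
  then show "\<forall>a. wfrec less_than \<phi> a = \<phi> (wfrec less_than \<phi>) a"
    unfolding fun_eq_iff .
  fix r assume r: "\<forall>a. r a = \<phi> r a"
  show "r = wfrec less_than \<phi>"
  proof
    fix a
    show "r a = wfrec less_than \<phi> a"
    proof (induction a rule: less_induct)
      case (less a)
      have "r a = \<phi> r a" using r by simp
      also have "\<dots> = \<phi> (wfrec less_than \<phi>) a" using less.IH by (rule local)
      also have "\<dots> = wfrec less_than \<phi> a" using fun_cong[OF wfrec_eq, of a] by (rule sym)
      finally show ?case .
    qed
  qed
qed

text \<open>
  The unknown \<open>r a\<close> enters the coefficient of \<open>x\<^sup>a L\<^sup>1\<close> only through \<open>-r a\<close>, so the
  matching condition is a recursion \<open>r a = \<phi> r a\<close>; the value at \<open>0\<close>, which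
  \<open>dse_sum\<close> never reads, is fixed to \<open>0\<close> to make the recursion uniquely solvable.
\<close>
lemma dse_sum_L1_coeff_solvable:
  fixes G :: "real fps fps" and g :: "nat \<Rightarrow> real fls" and T :: "real fps"
  assumes G1: "x_order_ge (G - 1) 1" and g: "\<And>k. 1 \<le> k \<Longrightarrow> fls_nth (g k) (-1) = 1"
    and T0: "T $ 0 = 0"
  shows "\<exists>r. dse_sum G s (\<lambda>k. fls_const (r k) * g k) $ 1 = T \<and>
           (\<forall>r'. dse_sum G s (\<lambda>k. fls_const (r' k) * g k) $ 1 = T \<longrightarrow> (\<forall>k\<ge>1. r' k = r k))"
proof -
  define S where "S r = dse_sum G s (\<lambda>k. fls_const (r k) * g k) $ 1" for r
  define \<phi> where "\<phi> r a = (if a = 0 then 0 else S r $ a + r a - T $ a)" for r a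
  have "\<exists>!r. \<forall>a. r a = \<phi> r a"
  proof (rule ex1_fixpoint_nat_less)
    fix r r' :: "nat \<Rightarrow> real" and a :: nat
    assume "\<And>k. k < a \<Longrightarrow> r k = r' k"
    then show "\<phi> r a = \<phi> r' a"
      using dse_sum_L1_coeff_triangular[OF G1, of a "\<lambda>k. fls_const (r k) * g k"
          "\<lambda>k. fls_const (r' k) * g k" s]
      by (simp add: \<phi>_def S_def g)
  qed
  then obtain r where r: "\<forall>a. r a = \<phi> r a" and unique: "\<And>r'. \<forall>a. r' a = \<phi> r' a \<Longrightarrow> r' = r"
    by blast
  have solves: "S r' = T \<longleftrightarrow> (\<forall>a\<ge>1. r' a = \<phi> r' a)" for r'
  proof -
    have "S r' $ 0 = 0" by (simp add: S_def dse_sum_def)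
    then show ?thesis
      using T0 by (auto simp: fps_eq_iff \<phi>_def) (metis not0_implies_Suc Suc_le_mono le0)
  qed
  show ?thesis
    unfolding S_def[symmetric]
  proof (intro exI[of _ r] conjI allI impI)
    show "S r = T" using solves r by simp
  next
    fix r' :: "nat \<Rightarrow> real" and k :: nat
    assume "S r' = T" and k: "1 \<le> k"
    moreover have "S (r'(0 := 0)) = S r'"
      unfolding S_def by (subst dse_sum_cong[where F' = "\<lambda>k. fls_const (r' k) * g k"]) auto
    ultimately have "r'(0 := 0) = r"
      using solves[of "r'(0 := 0)"] by (intro unique) (auto simp: \<phi>_def)
    then show "r' k = r k" using k by auto
  qed
qed

theorem mainTheorem1:
  fixes s :: int
    and \<gamma> :: "nat \<Rightarrow> real fps"
    and G :: "real fps fps"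
    and F g :: "nat \<Rightarrow> real fls"
  assumes F_pole: "\<forall>k\<ge>1. \<forall>i < -1. fls_nth (F k) i = 0"
    and \<gamma>_const: "\<forall>n\<ge>1. \<gamma> n $ 0 = 0"
    and \<gamma>_fin: "\<forall>a. finite {n. \<gamma> n $ a \<noteq> 0}"
    and G_form: "G = Abs_fps (\<lambda>n. if n = 0 then 1 else of_int (sgn s) * \<gamma> n)"
    and DSE: "G = 1 + of_int (sgn s) * dse_sum G s F"
    and g_form: "\<forall>k\<ge>1. fls_nth (g k) (-1) = 1 \<and> (\<forall>i < -1. fls_nth (g k) i = 0)"
  shows "\<exists>r :: nat \<Rightarrow> real.
           dse_sum G s F = dse_sum G s (\<lambda>k. fls_const (r k) * g k) \<and>
           (\<forall>r' :: nat \<Rightarrow> real.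
              dse_sum G s F = dse_sum G s (\<lambda>k. fls_const (r' k) * g k) \<longrightarrow>
              (\<forall>k\<ge>1. r' k = r k))"
proof -
  note G = L_series_props[OF \<gamma>_const \<gamma>_fin G_form]
  have rg: "rg_defect (G $ 1) s G = 0" by (rule dse_rg_equation[OF G DSE])
  have "dse_sum G s F $ 1 $ 0 = 0" by (simp add: dse_sum_def)
  then obtain r where r: "dse_sum G s (\<lambda>k. fls_const (r k) * g k) $ 1 = dse_sum G s F $ 1"
    and unique: "\<forall>r'. dse_sum G s (\<lambda>k. fls_const (r' k) * g k) $ 1 = dse_sum G s F $ 1 \<longrightarrow>
                   (\<forall>k\<ge>1. r' k = r k)"
    using dse_sum_L1_coeff_solvable[OF G(1), of g "dse_sum G s F $ 1" s] g_form by auto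
  show ?thesis
  proof (intro exI conjI allI impI)
    show "dse_sum G s F = dse_sum G s (\<lambda>k. fls_const (r k) * g k)"
      by (rule dse_sum_eq_if_L1_coeff_eq[OF G(1,2) rg]) (use r in simp)
  next
    fix r' :: "nat \<Rightarrow> real" and k :: nat
    assume "dse_sum G s F = dse_sum G s (\<lambda>k. fls_const (r' k) * g k)" and "1 \<le> k"
    then show "r' k = r k" using unique by simp
  qed
qed

end
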